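(* Let $I$ be a countable set with a quasi-distance $d$ such that $\sup_{i\in I}|B_R(i)|<\infty$ for every $R>0$. Let $\mathcal{C}\subset B(\ell^2(I))$ be the set of non-expansive operators. Then: (1) if $A,B\in\mathcal{C}$ and $c\in\mathbb{C}$ then $A+B\in\mathcal{C}$ and $cA\in\mathcal{C}$; (2) if $A,B\in\mathcal{C}$ then $AB\in\mathcal{C}$; (3) if $\mathcal{J}$ is a filter on a set $S$, $A_j\in\mathcal{C}$ for all $j\in S$, and $\lim_{j\to\mathcal{J}}\|A-A_j\|=0$ for some $A\in B(\ell^2(I))$, then $A\in\mathcal{C}$. Consequently $\mathcal{C}$ is a $C^*$-algebra.
   Context: A quasi-distance on $I$ is $d:I\times I\to[0,\infty)$ with $d(i,i)=0$, $d(i,j)=d(j,i)$, $d(i,j)\le d(i,k)+d(k,j)$. $B_R(i)=\{j\in I:d(j,i)\le R\}$. $\{\delta_i\}_{i\in I}$ is the canonical orthonormal basis of $\ell^2(I)$. An operator $A\in B(\ell^2(I))$ is row non-expansive if for every $\varepsilon>0$ there exists $N>0$ with $\sum_{j\in I\setminus B_N(i)}|\langle A\delta_i,\delta_j\rangle|^2<\varepsilon$ for all $i\in I$; $A$ is non-expansive if both $A$ and $A^*$ are row non-expansive. The limit along a filter: $\lim_{j\to\mathcal{J}}\|A-A_j\|=0$ means for every $\varepsilon>0$ the set $\{j:\|A-A_j\|<\varepsilon\}$ belongs to $\mathcal{J}$. *)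

theory Defs
  imports "HOL-Analysis.Analysis"
begin

text \<open>The index set I is the whole (countable) type 'i.  Vectors of l2(I) are
  square-summable functions 'i => complex; operators are functions on such
  vectors, and B(l2(I)) is the set of bounded linear ones.\<close>

definition quasi_distance :: "('i \<Rightarrow> 'i \<Rightarrow> real) \<Rightarrow> bool" where
  "quasi_distance d \<longleftrightarrow>
     (\<forall>i j. d i j \<ge> 0) \<and> (\<forall>i. d i i = 0) \<and> (\<forall>i j. d i j = d j i) \<and>
     (\<forall>i j k. d i j \<le> d i k + d k j)"

definition ball_qd :: "('i \<Rightarrow> 'i \<Rightarrow> real) \<Rightarrow> real \<Rightarrow> 'i \<Rightarrow> 'i set" where
  "ball_qd d R i = {j. d j i \<le> R}"

definition ell2 :: "('i \<Rightarrow> complex) set" where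
  "ell2 = {x. (\<lambda>i. (cmod (x i))\<^sup>2) summable_on UNIV}"

definition ell2_norm :: "('i \<Rightarrow> complex) \<Rightarrow> real" where
  "ell2_norm x = sqrt (\<Sum>\<^sub>\<infinity>i. (cmod (x i))\<^sup>2)"

definition ell2_inner :: "('i \<Rightarrow> complex) \<Rightarrow> ('i \<Rightarrow> complex) \<Rightarrow> complex" where
  "ell2_inner x y = (\<Sum>\<^sub>\<infinity>i. x i * cnj (y i))"

definition delta :: "'i \<Rightarrow> 'i \<Rightarrow> complex" where
  "delta i = (\<lambda>k. if k = i then 1 else 0)"

type_synonym 'i op = "('i \<Rightarrow> complex) \<Rightarrow> ('i \<Rightarrow> complex)"

definition bounded_op :: "'i op \<Rightarrow> bool" where
  "bounded_op A \<longleftrightarrow>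
     (\<forall>x\<in>ell2. A x \<in> ell2) \<and>
     (\<forall>x\<in>ell2. \<forall>y\<in>ell2. A (\<lambda>i. x i + y i) = (\<lambda>i. A x i + A y i)) \<and>
     (\<forall>c. \<forall>x\<in>ell2. A (\<lambda>i. c * x i) = (\<lambda>i. c * A x i)) \<and>
     (\<exists>K. \<forall>x\<in>ell2. ell2_norm (A x) \<le> K * ell2_norm x)"

definition op_norm :: "'i op \<Rightarrow> real" where
  "op_norm A = Sup {ell2_norm (A x) | x. x \<in> ell2 \<and> ell2_norm x \<le> 1}"

definition op_add :: "'i op \<Rightarrow> 'i op \<Rightarrow> 'i op" where
  "op_add A B = (\<lambda>x. (\<lambda>i. A x i + B x i))"
definition op_diff :: "'i op \<Rightarrow> 'i op \<Rightarrow> 'i op" where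
  "op_diff A B = (\<lambda>x. (\<lambda>i. A x i - B x i))"
definition op_scale :: "complex \<Rightarrow> 'i op \<Rightarrow> 'i op" where
  "op_scale c A = (\<lambda>x. (\<lambda>i. c * A x i))"
definition op_mult :: "'i op \<Rightarrow> 'i op \<Rightarrow> 'i op" where
  "op_mult A B = (\<lambda>x. A (B x))"

definition is_adjoint :: "'i op \<Rightarrow> 'i op \<Rightarrow> bool" where
  "is_adjoint A B \<longleftrightarrow> bounded_op A \<and> bounded_op B \<and>
     (\<forall>x\<in>ell2. \<forall>y\<in>ell2. ell2_inner (A x) y = ell2_inner x (B y))"

definition row_nonexpansive_entries ::
    "('i \<Rightarrow> 'i \<Rightarrow> real) \<Rightarrow> ('i \<Rightarrow> 'i \<Rightarrow> complex) \<Rightarrow> bool" where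
  "row_nonexpansive_entries d M \<longleftrightarrow>
     (\<forall>\<epsilon>>0. \<exists>N>0. \<forall>i.
        (\<Sum>\<^sub>\<infinity>j\<in>UNIV - ball_qd d N i. (cmod (M i j))\<^sup>2) < \<epsilon>)"

definition row_nonexpansive :: "('i \<Rightarrow> 'i \<Rightarrow> real) \<Rightarrow> 'i op \<Rightarrow> bool" where
  "row_nonexpansive d A \<longleftrightarrow>
     row_nonexpansive_entries d (\<lambda>i j. ell2_inner (A (delta i)) (delta j))"

text \<open>A is non-expansive iff A and A* are row non-expansive; the matrix entries
  of A* are <A* delta_i, delta_j> = <delta_i, A delta_j>.\<close>
definition nonexpansive :: "('i \<Rightarrow> 'i \<Rightarrow> real) \<Rightarrow> 'i op \<Rightarrow> bool" where
  "nonexpansive d A \<longleftrightarrow> row_nonexpansive d A \<and>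
     row_nonexpansive_entries d (\<lambda>i j. ell2_inner (delta i) (A (delta j)))"

definition nonexp_ops :: "('i \<Rightarrow> 'i \<Rightarrow> real) \<Rightarrow> 'i op set" where
  "nonexp_ops d = {A. bounded_op A \<and> nonexpansive d A}"

end

theory Submission
  imports Defs
begin

text \<open>Write the matrix of an operator with rows A delta_i. Membership in the class says that
  the rows of the matrix and of its transpose have l2-tails outside the balls B_N(i) that are
  small uniformly in i. Sums and scalar multiples preserve this by Minkowski's inequality, norm
  limits because the rows and columns of A - B have norm at most the operator norm of A - B, and
  adjoints because their matrix is the conjugate transpose.

  For a product, row i of AB is row i of B times the matrix of A. Split that row into its at most
  M entries in B_R(i) and the rest. By the triangle inequality, the first part only sees the tails
  of rows k of A outside B_S(k); the second part is small because A is bounded. Columns are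
  handled in the same way, with the transposed matrices, which act boundedly on l2 with the same
  norm.\<close>

section \<open>l2 norms on subsets of the index set\<close>

definition ell2_sqnorm_on :: "('i \<Rightarrow> complex) \<Rightarrow> 'i set \<Rightarrow> real" where
  "ell2_sqnorm_on x S = (\<Sum>\<^sub>\<infinity>i\<in>S. (cmod (x i))\<^sup>2)"

definition ell2_norm_on :: "('i \<Rightarrow> complex) \<Rightarrow> 'i set \<Rightarrow> real" where
  "ell2_norm_on x S = sqrt (ell2_sqnorm_on x S)"

lemma ell2_norm_eq_norm_on_UNIV: "ell2_norm x = ell2_norm_on x UNIV"
  by (simp add: ell2_norm_def ell2_norm_on_def ell2_sqnorm_on_def)

lemma ell2_summable_on: "x \<in> ell2 \<Longrightarrow> (\<lambda>i. (cmod (x i))\<^sup>2) summable_on S"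
  unfolding ell2_def using summable_on_subset by blast

lemma ell2_sqnorm_on_nonneg: "0 \<le> ell2_sqnorm_on x S"
  by (simp add: ell2_sqnorm_on_def infsum_nonneg)

lemma ell2_norm_on_nonneg: "0 \<le> ell2_norm_on x S"
  by (simp add: ell2_norm_on_def ell2_sqnorm_on_nonneg)

lemma ell2_norm_on_mono: "x \<in> ell2 \<Longrightarrow> S \<subseteq> T \<Longrightarrow> ell2_norm_on x S \<le> ell2_norm_on x T"
  unfolding ell2_norm_on_def ell2_sqnorm_on_def
  by (simp add: infsum_mono2 ell2_summable_on)

lemma L2_set_le_ell2_norm_on:
  assumes "x \<in> ell2" "finite F" "F \<subseteq> S"
  shows "L2_set (\<lambda>i. cmod (x i)) F \<le> ell2_norm_on x S"
  unfolding L2_set_def ell2_norm_on_def ell2_sqnorm_on_def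
  using finite_sum_le_infsum[OF ell2_summable_on] assms by simp

lemma norm_le_ell2_norm_on: "x \<in> ell2 \<Longrightarrow> i \<in> S \<Longrightarrow> cmod (x i) \<le> ell2_norm_on x S"
  using L2_set_le_ell2_norm_on[of x "{i}" S] by simp

lemma ell2_norm_on_leI:
  assumes "0 \<le> b" and bound: "\<And>F. finite F \<Longrightarrow> F \<subseteq> S \<Longrightarrow> L2_set (\<lambda>i. cmod (x i)) F \<le> b"
  shows "(\<lambda>i. (cmod (x i))\<^sup>2) summable_on S" and "ell2_norm_on x S \<le> b"
proof -
  have sq_bound: "(\<Sum>i\<in>F. (cmod (x i))\<^sup>2) \<le> b\<^sup>2" if "finite F" "F \<subseteq> S" for F
    using sqrt_le_D bound[OF that] unfolding L2_set_def by blast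
  show summable: "(\<lambda>i. (cmod (x i))\<^sup>2) summable_on S"
    by (rule nonneg_bdd_above_summable_on) (use sq_bound in \<open>auto intro!: bdd_aboveI\<close>)
  have "ell2_sqnorm_on x S \<le> b\<^sup>2"
    unfolding ell2_sqnorm_on_def by (rule infsum_le_finite_sums[OF summable sq_bound])
  then show "ell2_norm_on x S \<le> b"
    unfolding ell2_norm_on_def using \<open>0 \<le> b\<close> by (simp add: real_le_lsqrt)
qed

lemma ell2_leI:
  assumes "0 \<le> b" and "\<And>F. finite F \<Longrightarrow> L2_set (\<lambda>i. cmod (x i)) F \<le> b"
  shows "x \<in> ell2" and "ell2_norm_on x UNIV \<le> b"
  using ell2_norm_on_leI[of b UNIV x] assms unfolding ell2_def by auto

lemma L2_set_add_le_ell2_norm_on: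
  assumes "x \<in> ell2" "y \<in> ell2" "finite F" "F \<subseteq> S"
  shows "L2_set (\<lambda>i. cmod (x i + y i)) F \<le> ell2_norm_on x S + ell2_norm_on y S"
proof -
  have "L2_set (\<lambda>i. cmod (x i + y i)) F \<le> L2_set (\<lambda>i. cmod (x i) + cmod (y i)) F"
    by (rule L2_set_mono) (auto simp: norm_triangle_ineq)
  also have "\<dots> \<le> L2_set (\<lambda>i. cmod (x i)) F + L2_set (\<lambda>i. cmod (y i)) F"
    by (rule L2_set_triangle_ineq)
  also have "\<dots> \<le> ell2_norm_on x S + ell2_norm_on y S"
    using assms by (intro add_mono L2_set_le_ell2_norm_on)
  finally show ?thesis .
qed

lemma ell2_add: "x \<in> ell2 \<Longrightarrow> y \<in> ell2 \<Longrightarrow> (\<lambda>i. x i + y i) \<in> ell2"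
  by (rule ell2_leI(1)[OF _ L2_set_add_le_ell2_norm_on])
    (auto intro: add_nonneg_nonneg ell2_norm_on_nonneg)

lemma ell2_norm_on_add_le:
  "x \<in> ell2 \<Longrightarrow> y \<in> ell2 \<Longrightarrow> ell2_norm_on (\<lambda>i. x i + y i) S \<le> ell2_norm_on x S + ell2_norm_on y S"
  by (rule ell2_norm_on_leI(2)[OF _ L2_set_add_le_ell2_norm_on])
    (auto intro: add_nonneg_nonneg ell2_norm_on_nonneg)

lemma ell2_scale: "x \<in> ell2 \<Longrightarrow> (\<lambda>i. c * x i) \<in> ell2"
  unfolding ell2_def by (simp add: norm_mult power_mult_distrib summable_on_cmult_right)

lemma ell2_norm_on_scale: "ell2_norm_on (\<lambda>i. c * x i) S = cmod c * ell2_norm_on x S"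
  unfolding ell2_norm_on_def ell2_sqnorm_on_def
  by (simp add: norm_mult power_mult_distrib infsum_cmult_right' real_sqrt_mult)

lemma ell2_diff: "x \<in> ell2 \<Longrightarrow> y \<in> ell2 \<Longrightarrow> (\<lambda>i. x i - y i) \<in> ell2"
  using ell2_add[OF _ ell2_scale, of x y "-1"] by simp

lemma ell2_sum: "finite K \<Longrightarrow> (\<And>k. k \<in> K \<Longrightarrow> v k \<in> ell2) \<Longrightarrow> (\<lambda>i. \<Sum>k\<in>K. v k i) \<in> ell2"
proof (induction K rule: finite_induct)
  case empty
  then show ?case by (simp add: ell2_def)
next
  case (insert a K)
  then show ?case by (simp add: ell2_add)
qed

lemma ell2_norm_on_sum_le:
  "finite K \<Longrightarrow> (\<And>k. k \<in> K \<Longrightarrow> v k \<in> ell2) \<Longrightarrow>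
   ell2_norm_on (\<lambda>i. \<Sum>k\<in>K. v k i) S \<le> (\<Sum>k\<in>K. ell2_norm_on (v k) S)"
proof (induction K rule: finite_induct)
  case empty
  then show ?case by (simp add: ell2_norm_on_def ell2_sqnorm_on_def)
next
  case (insert a K)
  then have "ell2_norm_on (\<lambda>i. \<Sum>k\<in>insert a K. v k i) S
      \<le> ell2_norm_on (v a) S + ell2_norm_on (\<lambda>i. \<Sum>k\<in>K. v k i) S"
    using ell2_norm_on_add_le[of "v a" "\<lambda>i. \<Sum>k\<in>K. v k i"] by (simp add: ell2_sum)
  then show ?case using insert by simp
qed

lemma ell2_finite_support:
  assumes "finite F" and "\<And>k. k \<notin> F \<Longrightarrow> x k = 0"
  shows "x \<in> ell2"
proof -
  have "(\<lambda>i. (cmod (x i))\<^sup>2) summable_on F"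
    using \<open>finite F\<close> by simp
  then show ?thesis
    unfolding ell2_def
    using summable_on_cong_neutral[where S = F and T = UNIV and f = "\<lambda>i. (cmod (x i))\<^sup>2"
        and g = "\<lambda>i. (cmod (x i))\<^sup>2"] assms(2)
    by auto
qed

lemma ell2_norm_on_restrict: "ell2_norm_on (\<lambda>k. if k \<in> F then x k else 0) UNIV = ell2_norm_on x F"
  unfolding ell2_norm_on_def ell2_sqnorm_on_def
  by (rule arg_cong[where f = sqrt], rule infsum_cong_neutral) auto

lemma ell2_restrict: "x \<in> ell2 \<Longrightarrow> (\<lambda>k. if k \<in> F then x k else 0) \<in> ell2"
proof -
  assume "x \<in> ell2"
  then have "(\<lambda>i. (cmod (x i))\<^sup>2) summable_on F"
    by (rule ell2_summable_on)
  then show ?thesis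
    unfolding ell2_def mem_Collect_eq by (rule summable_on_cong_neutral[THEN iffD1, rotated -1]) auto
qed

lemma delta_ell2: "delta m \<in> ell2"
  by (rule ell2_finite_support[of "{m}"]) (auto simp: delta_def)

lemma ell2_norm_delta: "ell2_norm_on (delta m) UNIV = 1"
  using ell2_norm_on_restrict[of "{m}" "\<lambda>_. 1"] by (simp add: delta_def ell2_norm_on_def ell2_sqnorm_on_def)

lemma sum_scaled_delta: "finite F \<Longrightarrow> (\<Sum>j\<in>F. c j * delta j k) = (if k \<in> F then c k else 0)"
  by (simp add: delta_def if_distrib[of "\<lambda>z. _ * z"] sum.delta' cong: if_cong)

lemma infsum_delta_mult: "(\<Sum>\<^sub>\<infinity>k. delta i k * f k) = f i"
  by (subst infsum_cong_neutral[where T = "{i}"]) (auto simp: delta_def)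

lemma infsum_mult_delta: "(\<Sum>\<^sub>\<infinity>k. f k * delta i k) = f i"
  using infsum_delta_mult[of i f] by (simp add: mult.commute)

lemma ell2_inner_delta_right: "ell2_inner x (delta j) = x j"
proof -
  have "(\<lambda>i. x i * cnj (delta j i)) = (\<lambda>i. x i * delta j i)"
    by (rule ext) (simp add: delta_def)
  then show ?thesis
    by (simp add: ell2_inner_def infsum_mult_delta)
qed

lemma ell2_inner_delta_left: "ell2_inner (delta j) y = cnj (y j)"
  using infsum_delta_mult[of j "\<lambda>i. cnj (y i)"] by (simp add: ell2_inner_def)

lemma ell2_mult_abs_summable_on:
  assumes "x \<in> ell2" "y \<in> ell2"
  shows "(\<lambda>k. cmod (x k * y k)) summable_on S"
proof (rule summable_on_comparison_test)
  show "(\<lambda>k. (cmod (x k))\<^sup>2 + (cmod (y k))\<^sup>2) summable_on S"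
    using assms by (intro summable_on_add ell2_summable_on)
  show "cmod (x k * y k) \<le> (cmod (x k))\<^sup>2 + (cmod (y k))\<^sup>2" for k
    using sum_squares_bound[of "cmod (x k)" "cmod (y k)"]
      mult_nonneg_nonneg[OF norm_ge_zero[of "x k"] norm_ge_zero[of "y k"]]
    unfolding norm_mult by linarith
qed simp

lemma ell2_mult_summable_on: "x \<in> ell2 \<Longrightarrow> y \<in> ell2 \<Longrightarrow> (\<lambda>k. x k * y k) summable_on S"
  by (rule abs_summable_summable[OF ell2_mult_abs_summable_on])

lemma norm_infsum_mult_le:
  assumes x: "x \<in> ell2" and y: "y \<in> ell2"
  shows "cmod (\<Sum>\<^sub>\<infinity>k\<in>S. x k * y k) \<le> ell2_norm_on x S * ell2_norm_on y S"
proof -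
  have abs: "(\<lambda>k. cmod (x k * y k)) summable_on S"
    using x y by (rule ell2_mult_abs_summable_on)
  have "cmod (\<Sum>\<^sub>\<infinity>k\<in>S. x k * y k) \<le> (\<Sum>\<^sub>\<infinity>k\<in>S. cmod (x k * y k))"
    by (rule norm_infsum_bound[OF abs])
  also have "\<dots> \<le> ell2_norm_on x S * ell2_norm_on y S"
  proof (rule infsum_le_finite_sums[OF abs])
    fix F assume F: "finite F" "F \<subseteq> S"
    have "(\<Sum>k\<in>F. cmod (x k * y k)) = (\<Sum>k\<in>F. \<bar>cmod (x k)\<bar> * \<bar>cmod (y k)\<bar>)"
      by (simp add: norm_mult)
    also have "\<dots> \<le> L2_set (\<lambda>k. cmod (x k)) F * L2_set (\<lambda>k. cmod (y k)) F"
      by (rule L2_set_mult_ineq)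
    also have "\<dots> \<le> ell2_norm_on x S * ell2_norm_on y S"
      using L2_set_le_ell2_norm_on[OF x F] L2_set_le_ell2_norm_on[OF y F]
      by (intro mult_mono) (auto simp: ell2_norm_on_nonneg)
    finally show "(\<Sum>k\<in>F. cmod (x k * y k)) \<le> ell2_norm_on x S * ell2_norm_on y S" .
  qed
  finally show ?thesis .
qed

lemma has_sum_finite_sum:
  fixes f :: "'j \<Rightarrow> 'a \<Rightarrow> 'b::topological_comm_monoid_add"
  assumes "finite J" "\<And>j. j \<in> J \<Longrightarrow> (f j has_sum s j) A"
  shows "((\<lambda>x. \<Sum>j\<in>J. f j x) has_sum (\<Sum>j\<in>J. s j)) A"
  using assms by (induction J rule: finite_induct) (auto intro: has_sum_add)

section \<open>Bounded operators\<close>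

lemma bounded_op_ell2: "bounded_op C \<Longrightarrow> x \<in> ell2 \<Longrightarrow> C x \<in> ell2"
  unfolding bounded_op_def by blast

lemma bounded_op_additive:
  "bounded_op C \<Longrightarrow> x \<in> ell2 \<Longrightarrow> y \<in> ell2 \<Longrightarrow> C (\<lambda>i. x i + y i) = (\<lambda>i. C x i + C y i)"
  unfolding bounded_op_def by blast

lemma bounded_op_homogeneous: "bounded_op C \<Longrightarrow> x \<in> ell2 \<Longrightarrow> C (\<lambda>i. c * x i) = (\<lambda>i. c * C x i)"
  unfolding bounded_op_def by blast

lemma bounded_op_zero: "bounded_op C \<Longrightarrow> C (\<lambda>i. 0) = (\<lambda>i. 0)"
  using bounded_op_homogeneous[of C "\<lambda>i. 0" 0] by (simp add: ell2_def)

lemma bounded_op_sum: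
  assumes C: "bounded_op C" and "finite K" "\<And>k. k \<in> K \<Longrightarrow> v k \<in> ell2"
  shows "C (\<lambda>i. \<Sum>k\<in>K. c k * v k i) = (\<lambda>i. \<Sum>k\<in>K. c k * C (v k) i)"
  using assms(2,3)
proof (induction K rule: finite_induct)
  case empty
  then show ?case by (simp add: bounded_op_zero[OF C])
next
  case (insert a K)
  have "(\<lambda>i. \<Sum>k\<in>K. c k * v k i) \<in> ell2"
    using insert by (intro ell2_sum ell2_scale) auto
  then show ?case
    using insert by (simp add: bounded_op_additive[OF C] bounded_op_homogeneous[OF C] ell2_scale)
qed

lemma bounded_opI:
  assumes "\<forall>x\<in>ell2. C x \<in> ell2"
    and "\<forall>x\<in>ell2. \<forall>y\<in>ell2. C (\<lambda>i. x i + y i) = (\<lambda>i. C x i + C y i)"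
    and "\<forall>c. \<forall>x\<in>ell2. C (\<lambda>i. c * x i) = (\<lambda>i. c * C x i)"
    and "\<forall>x\<in>ell2. ell2_norm_on (C x) UNIV \<le> K * ell2_norm_on x UNIV"
  shows "bounded_op C"
  unfolding bounded_op_def ell2_norm_eq_norm_on_UNIV using assms by blast

lemma op_norm_upper:
  assumes C: "bounded_op C" and x: "x \<in> ell2" "ell2_norm_on x UNIV \<le> 1"
  shows "ell2_norm_on (C x) UNIV \<le> op_norm C"
proof -
  obtain K where K: "\<forall>x\<in>ell2. ell2_norm_on (C x) UNIV \<le> K * ell2_norm_on x UNIV"
    using C unfolding bounded_op_def ell2_norm_eq_norm_on_UNIV by blast
  have "bdd_above {ell2_norm (C x) | x. x \<in> ell2 \<and> ell2_norm x \<le> 1}"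
  proof (rule bdd_aboveI)
    fix r assume "r \<in> {ell2_norm (C x) | x. x \<in> ell2 \<and> ell2_norm x \<le> 1}"
    then obtain x where "x \<in> ell2" "ell2_norm_on x UNIV \<le> 1" "r = ell2_norm_on (C x) UNIV"
      unfolding ell2_norm_eq_norm_on_UNIV by blast
    moreover have "K * ell2_norm_on x UNIV \<le> max K 0 * ell2_norm_on x UNIV"
      by (rule mult_right_mono) (auto simp: ell2_norm_on_nonneg)
    moreover have "max K 0 * ell2_norm_on x UNIV \<le> max K 0"
      using \<open>ell2_norm_on x UNIV \<le> 1\<close> by (simp add: mult_left_le)
    ultimately show "r \<le> max K 0"
      using K by force
  qed
  then show ?thesis
    unfolding op_norm_def using x by (intro cSup_upper) (auto simp: ell2_norm_eq_norm_on_UNIV)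
qed

lemma op_norm_nonneg: "bounded_op C \<Longrightarrow> 0 \<le> op_norm C"
  using op_norm_upper[of C "\<lambda>i. 0"] ell2_norm_on_nonneg[of "\<lambda>i. 0"]
  by (simp add: bounded_op_zero ell2_def ell2_norm_on_def ell2_sqnorm_on_def)

lemma ell2_eq_0_if_norm_0: "x \<in> ell2 \<Longrightarrow> ell2_norm_on x UNIV = 0 \<Longrightarrow> x = (\<lambda>i. 0)"
  using norm_le_ell2_norm_on[of x _ UNIV] by fastforce

lemma ell2_norm_op_le:
  assumes C: "bounded_op C" and x: "x \<in> ell2"
  shows "ell2_norm_on (C x) UNIV \<le> op_norm C * ell2_norm_on x UNIV"
proof (cases "ell2_norm_on x UNIV = 0")
  case True
  then show ?thesis
    using ell2_eq_0_if_norm_0[OF x] by (simp add: bounded_op_zero[OF C] ell2_norm_on_def ell2_sqnorm_on_def)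
next
  case False
  define n where "n = ell2_norm_on x UNIV"
  have "n > 0"
    using False ell2_norm_on_nonneg[of x UNIV] unfolding n_def by linarith
  define y where "y = (\<lambda>i. complex_of_real (1 / n) * x i)"
  have "ell2_norm_on y UNIV = 1"
    unfolding y_def ell2_norm_on_scale norm_of_real using \<open>n > 0\<close> by (simp add: n_def)
  then have "ell2_norm_on (C y) UNIV \<le> op_norm C"
    using x unfolding y_def by (intro op_norm_upper[OF C] ell2_scale) auto
  then have "ell2_norm_on (C x) UNIV / n \<le> op_norm C"
    using \<open>n > 0\<close> unfolding y_def bounded_op_homogeneous[OF C x] ell2_norm_on_scale norm_of_real
    by simp
  then show ?thesis
    using \<open>n > 0\<close> unfolding n_def[symmetric] by (simp add: field_simps)
qed

lemma norm_op_apply_le: "bounded_op C \<Longrightarrow> x \<in> ell2 \<Longrightarrow> cmod (C x i) \<le> op_norm C * ell2_norm_on x UNIV"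
  using norm_le_ell2_norm_on[OF bounded_op_ell2] ell2_norm_op_le by (metis UNIV_I order_trans)

lemma ell2_norm_op_delta_le: "bounded_op C \<Longrightarrow> ell2_norm_on (C (delta i)) UNIV \<le> op_norm C"
  using ell2_norm_op_le[OF _ delta_ell2] by (simp add: ell2_norm_delta)

lemma bounded_op_add:
  assumes A: "bounded_op A" and B: "bounded_op B"
  shows "bounded_op (op_add A B)"
proof (rule bounded_opI[where K = "op_norm A + op_norm B"])
  show "\<forall>x\<in>ell2. op_add A B x \<in> ell2"
    unfolding op_add_def using ell2_add[OF bounded_op_ell2[OF A] bounded_op_ell2[OF B]] by simp
  show "\<forall>x\<in>ell2. \<forall>y\<in>ell2. op_add A B (\<lambda>i. x i + y i) = (\<lambda>i. op_add A B x i + op_add A B y i)"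
    unfolding op_add_def
    by (simp add: bounded_op_additive[OF A] bounded_op_additive[OF B] algebra_simps)
  show "\<forall>c. \<forall>x\<in>ell2. op_add A B (\<lambda>i. c * x i) = (\<lambda>i. c * op_add A B x i)"
    unfolding op_add_def
    by (simp add: bounded_op_homogeneous[OF A] bounded_op_homogeneous[OF B] algebra_simps)
  show "\<forall>x\<in>ell2. ell2_norm_on (op_add A B x) UNIV \<le> (op_norm A + op_norm B) * ell2_norm_on x UNIV"
  proof
    fix x :: "'a \<Rightarrow> complex" assume x: "x \<in> ell2"
    have "ell2_norm_on (op_add A B x) UNIV \<le> ell2_norm_on (A x) UNIV + ell2_norm_on (B x) UNIV"
      unfolding op_add_def by (rule ell2_norm_on_add_le[OF bounded_op_ell2[OF A x] bounded_op_ell2[OF B x]])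
    also have "\<dots> \<le> (op_norm A + op_norm B) * ell2_norm_on x UNIV"
      using ell2_norm_op_le[OF A x] ell2_norm_op_le[OF B x] by (simp add: algebra_simps)
    finally show "ell2_norm_on (op_add A B x) UNIV \<le> (op_norm A + op_norm B) * ell2_norm_on x UNIV" .
  qed
qed

lemma bounded_op_scale:
  assumes A: "bounded_op A"
  shows "bounded_op (op_scale c A)"
proof (rule bounded_opI[where K = "cmod c * op_norm A"])
  show "\<forall>x\<in>ell2. op_scale c A x \<in> ell2"
    unfolding op_scale_def using ell2_scale[OF bounded_op_ell2[OF A]] by simp
  show "\<forall>x\<in>ell2. \<forall>y\<in>ell2. op_scale c A (\<lambda>i. x i + y i) = (\<lambda>i. op_scale c A x i + op_scale c A y i)"
    unfolding op_scale_def by (simp add: bounded_op_additive[OF A] algebra_simps)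
  show "\<forall>c'. \<forall>x\<in>ell2. op_scale c A (\<lambda>i. c' * x i) = (\<lambda>i. c' * op_scale c A x i)"
    unfolding op_scale_def by (simp add: bounded_op_homogeneous[OF A] algebra_simps)
  show "\<forall>x\<in>ell2. ell2_norm_on (op_scale c A x) UNIV \<le> cmod c * op_norm A * ell2_norm_on x UNIV"
    unfolding op_scale_def ell2_norm_on_scale mult.assoc
    using ell2_norm_op_le[OF A] by (blast intro: mult_left_mono norm_ge_zero)
qed

lemma bounded_op_diff:
  assumes "bounded_op A" and "bounded_op B"
  shows "bounded_op (op_diff A B)"
proof -
  have "op_diff A B = op_add A (op_scale (-1) B)"
    unfolding op_diff_def op_add_def op_scale_def by simp
  then show ?thesis
    using assms by (simp add: bounded_op_add bounded_op_scale)
qed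

lemma bounded_op_mult:
  assumes A: "bounded_op A" and B: "bounded_op B"
  shows "bounded_op (op_mult A B)"
proof (rule bounded_opI[where K = "op_norm A * op_norm B"])
  show "\<forall>x\<in>ell2. op_mult A B x \<in> ell2"
    unfolding op_mult_def using bounded_op_ell2[OF A bounded_op_ell2[OF B]] by simp
  show "\<forall>x\<in>ell2. \<forall>y\<in>ell2. op_mult A B (\<lambda>i. x i + y i) = (\<lambda>i. op_mult A B x i + op_mult A B y i)"
    unfolding op_mult_def
    by (simp add: bounded_op_additive[OF A] bounded_op_additive[OF B] bounded_op_ell2[OF B])
  show "\<forall>c. \<forall>x\<in>ell2. op_mult A B (\<lambda>i. c * x i) = (\<lambda>i. c * op_mult A B x i)"
    unfolding op_mult_def
    by (simp add: bounded_op_homogeneous[OF A] bounded_op_homogeneous[OF B] bounded_op_ell2[OF B])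
  show "\<forall>x\<in>ell2. ell2_norm_on (op_mult A B x) UNIV \<le> op_norm A * op_norm B * ell2_norm_on x UNIV"
  proof
    fix x :: "'a \<Rightarrow> complex" assume x: "x \<in> ell2"
    have "ell2_norm_on (A (B x)) UNIV \<le> op_norm A * ell2_norm_on (B x) UNIV"
      by (rule ell2_norm_op_le[OF A bounded_op_ell2[OF B x]])
    also have "\<dots> \<le> op_norm A * (op_norm B * ell2_norm_on x UNIV)"
      by (rule mult_left_mono[OF ell2_norm_op_le[OF B x] op_norm_nonneg[OF A]])
    finally show "ell2_norm_on (op_mult A B x) UNIV \<le> op_norm A * op_norm B * ell2_norm_on x UNIV"
      by (simp add: op_mult_def mult.assoc)
  qed
qed

section \<open>The matrix of a bounded operator\<close>

definition vec_mat_mult :: "('i \<Rightarrow> complex) \<Rightarrow> ('i \<Rightarrow> 'i \<Rightarrow> complex) \<Rightarrow> 'i \<Rightarrow> complex" where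
  "vec_mat_mult r P = (\<lambda>j. \<Sum>\<^sub>\<infinity>k. r k * P k j)"

lemma vec_mat_mult_delta: "vec_mat_mult (delta i) P = P i"
  unfolding vec_mat_mult_def by (simp add: infsum_delta_mult)

lemma ell2_tail_tendsto_0:
  assumes x: "x \<in> ell2"
  shows "((\<lambda>F. ell2_norm_on x (UNIV - F)) \<longlongrightarrow> 0) (finite_subsets_at_top UNIV)"
proof -
  have partial_sums: "((\<lambda>F. \<Sum>k\<in>F. (cmod (x k))\<^sup>2) \<longlongrightarrow> ell2_sqnorm_on x UNIV) (finite_subsets_at_top UNIV)"
    using has_sum_infsum[OF ell2_summable_on[OF x]] unfolding has_sum_def ell2_sqnorm_on_def .
  have tail: "ell2_sqnorm_on x (UNIV - F) = ell2_sqnorm_on x UNIV - (\<Sum>k\<in>F. (cmod (x k))\<^sup>2)"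
    if "finite F" for F
    unfolding ell2_sqnorm_on_def using that by (subst infsum_Diff) (auto simp: ell2_summable_on[OF x])
  have "((\<lambda>F. ell2_sqnorm_on x UNIV - (\<Sum>k\<in>F. (cmod (x k))\<^sup>2)) \<longlongrightarrow> 0) (finite_subsets_at_top UNIV)"
    using tendsto_diff[OF tendsto_const[of "ell2_sqnorm_on x UNIV"] partial_sums] by simp
  then have "((\<lambda>F. ell2_sqnorm_on x (UNIV - F)) \<longlongrightarrow> 0) (finite_subsets_at_top UNIV)"
    by (rule Lim_transform_eventually) (auto simp: tail)
  from tendsto_real_sqrt[OF this] show ?thesis
    unfolding ell2_norm_on_def by simp
qed

lemma bounded_op_split_finite:
  assumes C: "bounded_op C" and x: "x \<in> ell2" and F: "finite F"
  shows "C x i = (\<Sum>k\<in>F. x k * C (delta k) i) + C (\<lambda>k. if k \<in> UNIV - F then x k else 0) i"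
proof -
  let ?rest = "\<lambda>k. if k \<in> UNIV - F then x k else 0"
  have decomp: "x = (\<lambda>k. (\<Sum>j\<in>F. x j * delta j k) + ?rest k)"
    by (simp add: sum_scaled_delta[OF F] fun_eq_iff)
  have head: "(\<lambda>k. \<Sum>j\<in>F. x j * delta j k) \<in> ell2"
    using F by (intro ell2_sum ell2_scale delta_ell2)
  have "C x = C (\<lambda>k. (\<Sum>j\<in>F. x j * delta j k) + ?rest k)"
    by (rule arg_cong[OF decomp])
  also have "\<dots> = (\<lambda>k. C (\<lambda>k. \<Sum>j\<in>F. x j * delta j k) k + C ?rest k)"
    by (rule bounded_op_additive[OF C head ell2_restrict[OF x]])
  finally show ?thesis
    by (simp add: bounded_op_sum[OF C F delta_ell2])
qed

lemma bounded_op_has_sum_matrix: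
  assumes C: "bounded_op C" and x: "x \<in> ell2"
  shows "((\<lambda>k. x k * C (delta k) i) has_sum C x i) UNIV"
  unfolding has_sum_def
proof (rule LIM_zero_cancel, rule Lim_null_comparison)
  show "\<forall>\<^sub>F F in finite_subsets_at_top UNIV.
          norm ((\<Sum>k\<in>F. x k * C (delta k) i) - C x i) \<le> op_norm C * ell2_norm_on x (UNIV - F)"
  proof (rule eventually_finite_subsets_at_top_weakI)
    fix F :: "'a set" assume "finite F"
    have "norm ((\<Sum>k\<in>F. x k * C (delta k) i) - C x i) = cmod (C (\<lambda>k. if k \<in> UNIV - F then x k else 0) i)"
      using bounded_op_split_finite[OF C x \<open>finite F\<close>, of i] by (simp add: norm_minus_commute)
    also have "\<dots> \<le> op_norm C * ell2_norm_on x (UNIV - F)"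
      using norm_op_apply_le[OF C ell2_restrict[OF x, of "UNIV - F"], of i]
      unfolding ell2_norm_on_restrict .
    finally show "norm ((\<Sum>k\<in>F. x k * C (delta k) i) - C x i) \<le> op_norm C * ell2_norm_on x (UNIV - F)" .
  qed
  show "((\<lambda>F. op_norm C * ell2_norm_on x (UNIV - F)) \<longlongrightarrow> 0) (finite_subsets_at_top UNIV)"
    using tendsto_mult[OF tendsto_const ell2_tail_tendsto_0[OF x], of "op_norm C"] by simp
qed

lemma bounded_op_eq_vec_mat_mult:
  assumes "bounded_op C" and "x \<in> ell2"
  shows "C x = vec_mat_mult x (\<lambda>k. C (delta k))"
  unfolding vec_mat_mult_def by (rule ext) (simp add: infsumI[OF bounded_op_has_sum_matrix[OF assms]])

lemma sqrt_le_if_le_mult_sqrt: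
  fixes s b :: real
  assumes "s \<le> b * sqrt s" and "0 \<le> s" and "0 \<le> b"
  shows "sqrt s \<le> b"
proof (cases "s = 0")
  case True
  then show ?thesis using assms by simp
next
  case False
  then have "0 < sqrt s" and "sqrt s * sqrt s \<le> b * sqrt s"
    using assms real_sqrt_mult_self[of s] by simp_all
  then show ?thesis
    by (rule mult_right_le_imp_le[rotated])
qed

lemma L2_set_vec_mat_mult_transpose_le:
  assumes C: "bounded_op C" and r: "r \<in> ell2" and F: "finite F"
  shows "L2_set (\<lambda>j. cmod (vec_mat_mult r (\<lambda>k j. C (delta j) k) j)) F \<le> op_norm C * ell2_norm_on r UNIV"
proof -
  define w where "w = vec_mat_mult r (\<lambda>k j. C (delta j) k)"
  define s where "s = (\<Sum>j\<in>F. (cmod (w j))\<^sup>2)"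
  define y where "y = (\<lambda>k. \<Sum>j\<in>F. cnj (w j) * delta j k)"
  have "0 \<le> s"
    by (simp add: s_def sum_nonneg)
  have y: "y \<in> ell2"
    unfolding y_def using F by (intro ell2_sum ell2_scale delta_ell2)
  have norm_y: "ell2_norm_on y UNIV = sqrt s"
    unfolding y_def sum_scaled_delta[OF F] ell2_norm_on_restrict
    using F by (simp add: ell2_norm_on_def ell2_sqnorm_on_def s_def)
  have Cy: "C y = (\<lambda>k. \<Sum>j\<in>F. cnj (w j) * C (delta j) k)"
    unfolding y_def by (rule bounded_op_sum[OF C F delta_ell2])
  \<comment> \<open>Pairing r with C y, where y is the conjugate of w truncated to F, yields the squared
    norm s of that truncation; Cauchy-Schwarz then gives s \<le> norm C * norm r * sqrt s.\<close>
  have "((\<lambda>k. cnj (w j) * (r k * C (delta j) k)) has_sum cnj (w j) * w j) UNIV" for j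
    unfolding w_def vec_mat_mult_def
    using ell2_mult_summable_on[OF r bounded_op_ell2[OF C delta_ell2]]
    by (intro has_sum_cmult_right has_sum_infsum)
  then have "((\<lambda>k. \<Sum>j\<in>F. cnj (w j) * (r k * C (delta j) k)) has_sum (\<Sum>j\<in>F. cnj (w j) * w j)) UNIV"
    by (rule has_sum_finite_sum[OF F])
  then have "((\<lambda>k. r k * C y k) has_sum (\<Sum>j\<in>F. cnj (w j) * w j)) UNIV"
    unfolding Cy by (simp add: sum_distrib_left mult_ac)
  moreover have "(\<Sum>j\<in>F. cnj (w j) * w j) = of_real s"
    unfolding s_def of_real_sum complex_norm_square by (simp add: mult.commute)
  ultimately have "(\<Sum>\<^sub>\<infinity>k. r k * C y k) = of_real s"
    by (simp add: infsumI)
  then have "s \<le> ell2_norm_on r UNIV * ell2_norm_on (C y) UNIV"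
    using norm_infsum_mult_le[OF r bounded_op_ell2[OF C y], of UNIV] \<open>0 \<le> s\<close> by simp
  also have "\<dots> \<le> ell2_norm_on r UNIV * (op_norm C * sqrt s)"
    using ell2_norm_op_le[OF C y] unfolding norm_y by (rule mult_left_mono) (rule ell2_norm_on_nonneg)
  also have "\<dots> = op_norm C * ell2_norm_on r UNIV * sqrt s"
    by simp
  finally have "sqrt s \<le> op_norm C * ell2_norm_on r UNIV"
    using \<open>0 \<le> s\<close> by (rule sqrt_le_if_le_mult_sqrt) (simp add: op_norm_nonneg[OF C] ell2_norm_on_nonneg)
  then show ?thesis
    by (simp add: L2_set_def s_def w_def)
qed

lemma vec_mat_mult_transpose:
  assumes "bounded_op C" and "r \<in> ell2"
  shows "vec_mat_mult r (\<lambda>k j. C (delta j) k) \<in> ell2"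
    and "ell2_norm_on (vec_mat_mult r (\<lambda>k j. C (delta j) k)) UNIV \<le> op_norm C * ell2_norm_on r UNIV"
  using ell2_leI[OF _ L2_set_vec_mat_mult_transpose_le[OF assms]] assms
  by (simp_all add: op_norm_nonneg ell2_norm_on_nonneg)

lemma bounded_op_column_ell2:
  assumes "bounded_op C"
  shows "(\<lambda>j. C (delta j) i) \<in> ell2" and "ell2_norm_on (\<lambda>j. C (delta j) i) UNIV \<le> op_norm C"
  using vec_mat_mult_transpose[OF assms delta_ell2, of i]
  by (simp_all add: vec_mat_mult_delta ell2_norm_delta)

section \<open>Uniform decay of the rows of a matrix\<close>

definition uniform_tail_decay :: "('i \<Rightarrow> 'i \<Rightarrow> real) \<Rightarrow> ('i \<Rightarrow> 'i \<Rightarrow> complex) \<Rightarrow> bool" where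
  "uniform_tail_decay d v \<longleftrightarrow> (\<forall>\<epsilon>>0. \<exists>N>0. \<forall>i. ell2_norm_on (v i) (UNIV - ball_qd d N i) \<le> \<epsilon>)"

lemma row_nonexpansive_entries_iff_uniform_tail_decay:
  "row_nonexpansive_entries d v \<longleftrightarrow> uniform_tail_decay d v"
proof
  assume decay: "row_nonexpansive_entries d v"
  show "uniform_tail_decay d v"
    unfolding uniform_tail_decay_def
  proof (intro allI impI)
    fix \<epsilon> :: real assume "\<epsilon> > 0"
    then obtain N where "N > 0" and N: "\<And>i. ell2_sqnorm_on (v i) (UNIV - ball_qd d N i) < \<epsilon>\<^sup>2"
      using decay unfolding row_nonexpansive_entries_def ell2_sqnorm_on_def by (meson zero_less_power)
    then have "ell2_norm_on (v i) (UNIV - ball_qd d N i) \<le> \<epsilon>" for i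
      unfolding ell2_norm_on_def using \<open>\<epsilon> > 0\<close> by (meson less_imp_le real_le_lsqrt)
    then show "\<exists>N>0. \<forall>i. ell2_norm_on (v i) (UNIV - ball_qd d N i) \<le> \<epsilon>"
      using \<open>N > 0\<close> by blast
  qed
next
  assume decay: "uniform_tail_decay d v"
  show "row_nonexpansive_entries d v"
    unfolding row_nonexpansive_entries_def
  proof (intro allI impI)
    fix \<epsilon> :: real assume "\<epsilon> > 0"
    then obtain N where "N > 0" and N: "\<And>i. ell2_norm_on (v i) (UNIV - ball_qd d N i) \<le> sqrt \<epsilon> / 2"
      using decay unfolding uniform_tail_decay_def by (meson half_gt_zero real_sqrt_gt_zero)
    have "sqrt (ell2_sqnorm_on (v i) (UNIV - ball_qd d N i)) < sqrt \<epsilon>" for i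
      using N[of i] real_sqrt_gt_zero[OF \<open>\<epsilon> > 0\<close>] unfolding ell2_norm_on_def by linarith
    then show "\<exists>N>0. \<forall>i. (\<Sum>\<^sub>\<infinity>j\<in>UNIV - ball_qd d N i. (cmod (v i j))\<^sup>2) < \<epsilon>"
      using \<open>N > 0\<close> unfolding ell2_sqnorm_on_def real_sqrt_less_iff by blast
  qed
qed

lemma uniform_tail_decay_cnj: "uniform_tail_decay d (\<lambda>i j. cnj (v i j)) \<longleftrightarrow> uniform_tail_decay d v"
  by (simp add: uniform_tail_decay_def ell2_norm_on_def ell2_sqnorm_on_def)

lemma nonexp_ops_iff:
  "A \<in> nonexp_ops d \<longleftrightarrow>
     bounded_op A \<and> uniform_tail_decay d (\<lambda>i. A (delta i)) \<and> uniform_tail_decay d (\<lambda>i j. A (delta j) i)"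
proof -
  have "(\<lambda>i j. ell2_inner (A (delta i)) (delta j)) = (\<lambda>i. A (delta i))"
    by (simp add: ell2_inner_delta_right)
  moreover have "(\<lambda>i j. ell2_inner (delta i) (A (delta j))) = (\<lambda>i j. cnj (A (delta j) i))"
    by (simp add: ell2_inner_delta_left)
  ultimately show ?thesis
    unfolding nonexp_ops_def nonexpansive_def row_nonexpansive_def
      row_nonexpansive_entries_iff_uniform_tail_decay
    by (simp add: uniform_tail_decay_cnj)
qed

lemma nonexp_opsD:
  assumes "A \<in> nonexp_ops d"
  shows "bounded_op A" and "uniform_tail_decay d (\<lambda>i. A (delta i))"
    and "uniform_tail_decay d (\<lambda>i j. A (delta j) i)"
  using assms by (simp_all add: nonexp_ops_iff)

lemma ell2_norm_on_tail_antimono: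
  "x \<in> ell2 \<Longrightarrow> N \<le> N' \<Longrightarrow> ell2_norm_on x (UNIV - ball_qd d N' i) \<le> ell2_norm_on x (UNIV - ball_qd d N i)"
  by (rule ell2_norm_on_mono) (auto simp: ball_qd_def)

lemma obtain_pos_mult_le:
  fixes a e :: real
  assumes "0 \<le> a" and "0 < e"
  obtains \<delta> where "0 < \<delta>" and "a * \<delta> \<le> e"
proof
  show "0 < e / (a + 1)"
    using assms by simp
  show "a * (e / (a + 1)) \<le> e"
    using assms by (simp add: field_simps)
qed

lemma uniform_tail_decay_add:
  assumes v: "\<And>i. v i \<in> ell2" and w: "\<And>i. w i \<in> ell2"
    and "uniform_tail_decay d v" and "uniform_tail_decay d w"
  shows "uniform_tail_decay d (\<lambda>i j. v i j + w i j)"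
  unfolding uniform_tail_decay_def
proof (intro allI impI)
  fix \<epsilon> :: real assume "\<epsilon> > 0"
  obtain N1 where "N1 > 0" and N1: "\<And>i. ell2_norm_on (v i) (UNIV - ball_qd d N1 i) \<le> \<epsilon> / 2"
    using assms(3) \<open>\<epsilon> > 0\<close> unfolding uniform_tail_decay_def by (meson half_gt_zero)
  obtain N2 where N2: "\<And>i. ell2_norm_on (w i) (UNIV - ball_qd d N2 i) \<le> \<epsilon> / 2"
    using assms(4) \<open>\<epsilon> > 0\<close> unfolding uniform_tail_decay_def by (meson half_gt_zero)
  have "ell2_norm_on (\<lambda>j. v i j + w i j) (UNIV - ball_qd d (max N1 N2) i) \<le> \<epsilon>" for i
  proof -
    have "ell2_norm_on (\<lambda>j. v i j + w i j) (UNIV - ball_qd d (max N1 N2) i)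
        \<le> ell2_norm_on (v i) (UNIV - ball_qd d (max N1 N2) i)
          + ell2_norm_on (w i) (UNIV - ball_qd d (max N1 N2) i)"
      by (rule ell2_norm_on_add_le[OF v w])
    also have "\<dots> \<le> ell2_norm_on (v i) (UNIV - ball_qd d N1 i) + ell2_norm_on (w i) (UNIV - ball_qd d N2 i)"
      by (intro add_mono ell2_norm_on_tail_antimono[OF v] ell2_norm_on_tail_antimono[OF w]) auto
    finally show ?thesis
      using N1[of i] N2[of i] by linarith
  qed
  then show "\<exists>N>0. \<forall>i. ell2_norm_on (\<lambda>j. v i j + w i j) (UNIV - ball_qd d N i) \<le> \<epsilon>"
    using \<open>N1 > 0\<close> by (intro exI[of _ "max N1 N2"]) auto
qed

lemma uniform_tail_decay_scale:
  assumes "uniform_tail_decay d v"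
  shows "uniform_tail_decay d (\<lambda>i j. c * v i j)"
  unfolding uniform_tail_decay_def
proof (intro allI impI)
  fix \<epsilon> :: real assume "\<epsilon> > 0"
  obtain \<delta> where "\<delta> > 0" and "cmod c * \<delta> \<le> \<epsilon>"
    using obtain_pos_mult_le[OF norm_ge_zero \<open>\<epsilon> > 0\<close>] .
  then obtain N where "N > 0" and N: "\<And>i. ell2_norm_on (v i) (UNIV - ball_qd d N i) \<le> \<delta>"
    using assms unfolding uniform_tail_decay_def by blast
  have "ell2_norm_on (\<lambda>j. c * v i j) (UNIV - ball_qd d N i) \<le> \<epsilon>" for i
    using mult_left_mono[OF N[of i] norm_ge_zero[of c]] \<open>cmod c * \<delta> \<le> \<epsilon>\<close>
    by (simp add: ell2_norm_on_scale)
  then show "\<exists>N>0. \<forall>i. ell2_norm_on (\<lambda>j. c * v i j) (UNIV - ball_qd d N i) \<le> \<epsilon>"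
    using \<open>N > 0\<close> by blast
qed

lemma uniform_tail_decay_approx:
  assumes v: "\<And>i. v i \<in> ell2"
    and approx: "\<And>\<epsilon>. \<epsilon> > 0 \<Longrightarrow> \<exists>w. uniform_tail_decay d w \<and> (\<forall>i. w i \<in> ell2) \<and>
                                   (\<forall>i. ell2_norm_on (\<lambda>j. v i j - w i j) UNIV \<le> \<epsilon>)"
  shows "uniform_tail_decay d v"
  unfolding uniform_tail_decay_def
proof (intro allI impI)
  fix \<epsilon> :: real assume "\<epsilon> > 0"
  then obtain w where "uniform_tail_decay d w" and w: "\<And>i. w i \<in> ell2"
    and close: "\<And>i. ell2_norm_on (\<lambda>j. v i j - w i j) UNIV \<le> \<epsilon> / 2"
    using approx[of "\<epsilon> / 2"] by auto
  then obtain N where "N > 0" and N: "\<And>i. ell2_norm_on (w i) (UNIV - ball_qd d N i) \<le> \<epsilon> / 2"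
    using \<open>\<epsilon> > 0\<close> unfolding uniform_tail_decay_def by (meson half_gt_zero)
  have "ell2_norm_on (v i) (UNIV - ball_qd d N i) \<le> \<epsilon>" for i
  proof -
    have diff: "(\<lambda>j. v i j - w i j) \<in> ell2"
      by (rule ell2_diff[OF v w])
    have "ell2_norm_on (v i) (UNIV - ball_qd d N i)
        = ell2_norm_on (\<lambda>j. (v i j - w i j) + w i j) (UNIV - ball_qd d N i)"
      by simp
    also have "\<dots> \<le> ell2_norm_on (\<lambda>j. v i j - w i j) (UNIV - ball_qd d N i)
                    + ell2_norm_on (w i) (UNIV - ball_qd d N i)"
      by (rule ell2_norm_on_add_le[OF diff w])
    also have "\<dots> \<le> ell2_norm_on (\<lambda>j. v i j - w i j) UNIV + \<epsilon> / 2"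
      by (intro add_mono ell2_norm_on_mono[OF diff] N) auto
    finally show ?thesis
      using close[of i] by linarith
  qed
  then show "\<exists>N>0. \<forall>i. ell2_norm_on (v i) (UNIV - ball_qd d N i) \<le> \<epsilon>"
    using \<open>N > 0\<close> by blast
qed

lemma ball_qd_compl_subset:
  assumes "quasi_distance d" and "m \<in> ball_qd d R i"
  shows "UNIV - ball_qd d (R + S) i \<subseteq> UNIV - ball_qd d S m"
proof
  fix j assume "j \<in> UNIV - ball_qd d (R + S) i"
  moreover have "d j i \<le> d j m + d m i"
    using assms(1) unfolding quasi_distance_def by blast
  ultimately show "j \<in> UNIV - ball_qd d S m"
    using assms(2) unfolding ball_qd_def by auto
qed

lemma vec_mat_mult_split:
  assumes "finite B" and q: "q \<in> ell2" and cols: "\<And>j. (\<lambda>k. P k j) \<in> ell2"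
  shows "vec_mat_mult q P j
           = (\<Sum>m\<in>B. q m * P m j) + vec_mat_mult (\<lambda>k. if k \<in> UNIV - B then q k else 0) P j"
proof -
  let ?head = "\<lambda>k. if k \<in> B then q k else 0" and ?rest = "\<lambda>k. if k \<in> UNIV - B then q k else 0"
  have "(\<Sum>\<^sub>\<infinity>k. q k * P k j) = (\<Sum>\<^sub>\<infinity>k. ?head k * P k j + ?rest k * P k j)"
    by (rule infsum_cong) auto
  also have "\<dots> = (\<Sum>\<^sub>\<infinity>k. ?head k * P k j) + (\<Sum>\<^sub>\<infinity>k. ?rest k * P k j)"
    by (intro infsum_add ell2_mult_summable_on ell2_restrict[OF q] cols)
  also have "(\<Sum>\<^sub>\<infinity>k. ?head k * P k j) = (\<Sum>\<^sub>\<infinity>k\<in>B. q k * P k j)"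
    by (rule infsum_cong_neutral) auto
  finally show ?thesis
    using \<open>finite B\<close> by (simp add: vec_mat_mult_def)
qed

lemma ell2_norm_on_ball_combination_tail_le:
  assumes d: "quasi_distance d" and rows: "\<And>k. P k \<in> ell2"
    and rows_tail: "\<And>k. ell2_norm_on (P k) (UNIV - ball_qd d S k) \<le> \<delta>"
    and q: "q \<in> ell2" and ball: "finite (ball_qd d R i)"
  shows "ell2_norm_on (\<lambda>j. \<Sum>m\<in>ball_qd d R i. q m * P m j) (UNIV - ball_qd d (R + S) i)
           \<le> real (card (ball_qd d R i)) * ell2_norm_on q UNIV * \<delta>"
proof -
  let ?T = "UNIV - ball_qd d (R + S) i"
  have "ell2_norm_on (\<lambda>j. \<Sum>m\<in>ball_qd d R i. q m * P m j) ?T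
      \<le> (\<Sum>m\<in>ball_qd d R i. ell2_norm_on (\<lambda>j. q m * P m j) ?T)"
    using ball by (intro ell2_norm_on_sum_le ell2_scale rows)
  also have "\<dots> \<le> (\<Sum>m\<in>ball_qd d R i. ell2_norm_on q UNIV * \<delta>)"
  proof (rule sum_mono)
    fix m assume "m \<in> ball_qd d R i"
    have "ell2_norm_on (P m) ?T \<le> ell2_norm_on (P m) (UNIV - ball_qd d S m)"
      using ball_qd_compl_subset[OF d \<open>m \<in> ball_qd d R i\<close>] by (rule ell2_norm_on_mono[OF rows])
    then show "ell2_norm_on (\<lambda>j. q m * P m j) ?T \<le> ell2_norm_on q UNIV * \<delta>"
      unfolding ell2_norm_on_scale using norm_le_ell2_norm_on[OF q, of m UNIV] rows_tail[of m]
      by (intro mult_mono) (auto simp: ell2_norm_on_nonneg)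
  qed
  also have "\<dots> = real (card (ball_qd d R i)) * ell2_norm_on q UNIV * \<delta>"
    by simp
  finally show ?thesis .
qed

lemma vec_mat_mult_tail_le:
  assumes d: "quasi_distance d"
    and rows: "\<And>k. P k \<in> ell2" and cols: "\<And>j. (\<lambda>k. P k j) \<in> ell2"
    and mult_ell2: "\<And>r. r \<in> ell2 \<Longrightarrow> vec_mat_mult r P \<in> ell2"
    and mult_bound: "\<And>r. r \<in> ell2 \<Longrightarrow> ell2_norm_on (vec_mat_mult r P) UNIV \<le> K * ell2_norm_on r UNIV"
    and rows_tail: "\<And>k. ell2_norm_on (P k) (UNIV - ball_qd d S k) \<le> \<delta>"
    and q: "q \<in> ell2" and ball: "finite (ball_qd d R i)"
  shows "ell2_norm_on (vec_mat_mult q P) (UNIV - ball_qd d (R + S) i)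
           \<le> real (card (ball_qd d R i)) * ell2_norm_on q UNIV * \<delta>
             + K * ell2_norm_on q (UNIV - ball_qd d R i)"
proof -
  define B where "B = ball_qd d R i"
  define T where "T = UNIV - ball_qd d (R + S) i"
  define head where "head = (\<lambda>j. \<Sum>m\<in>B. q m * P m j)"
  define rest where "rest = (\<lambda>k. if k \<in> UNIV - B then q k else 0)"
  have "finite B"
    using ball by (simp add: B_def)
  have rest: "rest \<in> ell2"
    unfolding rest_def by (rule ell2_restrict[OF q])
  have head: "head \<in> ell2"
    unfolding head_def using \<open>finite B\<close> by (intro ell2_sum ell2_scale rows)
  have "ell2_norm_on (vec_mat_mult rest P) T \<le> ell2_norm_on (vec_mat_mult rest P) UNIV"
    by (rule ell2_norm_on_mono[OF mult_ell2[OF rest]]) simp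
  also have "\<dots> \<le> K * ell2_norm_on q (UNIV - B)"
    using mult_bound[OF rest] unfolding rest_def ell2_norm_on_restrict .
  finally have rest_tail: "ell2_norm_on (vec_mat_mult rest P) T \<le> K * ell2_norm_on q (UNIV - B)" .
  have "vec_mat_mult q P = (\<lambda>j. head j + vec_mat_mult rest P j)"
    unfolding head_def rest_def using vec_mat_mult_split[of B q P, OF \<open>finite B\<close> q cols] by blast
  then have "ell2_norm_on (vec_mat_mult q P) T \<le> ell2_norm_on head T + ell2_norm_on (vec_mat_mult rest P) T"
    using ell2_norm_on_add_le[OF head mult_ell2[OF rest]] by simp
  then show ?thesis
    using ell2_norm_on_ball_combination_tail_le[OF d rows rows_tail q ball] rest_tail
    unfolding B_def T_def head_def by linarith
qed

lemma uniform_tail_decay_vec_mat_mult: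
  assumes d: "quasi_distance d"
    and balls: "\<forall>R>0. \<exists>M::nat. \<forall>i. finite (ball_qd d R i) \<and> card (ball_qd d R i) \<le> M"
    and rows: "\<And>k. P k \<in> ell2" and cols: "\<And>j. (\<lambda>k. P k j) \<in> ell2"
    and mult_ell2: "\<And>r. r \<in> ell2 \<Longrightarrow> vec_mat_mult r P \<in> ell2"
    and mult_bound: "\<And>r. r \<in> ell2 \<Longrightarrow> ell2_norm_on (vec_mat_mult r P) UNIV \<le> K * ell2_norm_on r UNIV"
    and "0 \<le> K" and P_decay: "uniform_tail_decay d P"
    and q: "\<And>i. q i \<in> ell2" and q_bound: "\<And>i. ell2_norm_on (q i) UNIV \<le> L"
    and q_decay: "uniform_tail_decay d q"
  shows "uniform_tail_decay d (\<lambda>i. vec_mat_mult (q i) P)"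
  unfolding uniform_tail_decay_def
proof (intro allI impI)
  fix \<epsilon> :: real assume "\<epsilon> > 0"
  have "0 \<le> L"
    using ell2_norm_on_nonneg q_bound order_trans by blast
  obtain \<delta>1 where "\<delta>1 > 0" and "K * \<delta>1 \<le> \<epsilon> / 2"
    using obtain_pos_mult_le[OF \<open>0 \<le> K\<close>, of "\<epsilon> / 2"] \<open>\<epsilon> > 0\<close> by auto
  then obtain R where "R > 0" and R: "\<And>i. ell2_norm_on (q i) (UNIV - ball_qd d R i) \<le> \<delta>1"
    using q_decay unfolding uniform_tail_decay_def by blast
  then obtain M :: nat where M: "\<And>i. finite (ball_qd d R i)" "\<And>i. card (ball_qd d R i) \<le> M"
    using balls by blast
  obtain \<delta>2 where "\<delta>2 > 0" and "real M * L * \<delta>2 \<le> \<epsilon> / 2"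
    using obtain_pos_mult_le[of "real M * L" "\<epsilon> / 2"] \<open>0 \<le> L\<close> \<open>\<epsilon> > 0\<close> by auto
  then obtain S where "S > 0" and S: "\<And>k. ell2_norm_on (P k) (UNIV - ball_qd d S k) \<le> \<delta>2"
    using P_decay unfolding uniform_tail_decay_def by blast
  have "ell2_norm_on (vec_mat_mult (q i) P) (UNIV - ball_qd d (R + S) i) \<le> \<epsilon>" for i
  proof -
    have "real (card (ball_qd d R i)) * ell2_norm_on (q i) UNIV \<le> real M * L"
      using M(2)[of i] q_bound[of i] by (intro mult_mono) (auto simp: ell2_norm_on_nonneg)
    then have "real (card (ball_qd d R i)) * ell2_norm_on (q i) UNIV * \<delta>2 \<le> real M * L * \<delta>2"
      using \<open>\<delta>2 > 0\<close> by (intro mult_right_mono) auto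
    moreover have "K * ell2_norm_on (q i) (UNIV - ball_qd d R i) \<le> K * \<delta>1"
      using R[of i] \<open>0 \<le> K\<close> by (rule mult_left_mono)
    moreover have "ell2_norm_on (vec_mat_mult (q i) P) (UNIV - ball_qd d (R + S) i)
        \<le> real (card (ball_qd d R i)) * ell2_norm_on (q i) UNIV * \<delta>2
          + K * ell2_norm_on (q i) (UNIV - ball_qd d R i)"
      by (rule vec_mat_mult_tail_le[OF d rows cols mult_ell2 mult_bound S q M(1)])
    ultimately show ?thesis
      using \<open>K * \<delta>1 \<le> \<epsilon> / 2\<close> \<open>real M * L * \<delta>2 \<le> \<epsilon> / 2\<close> by linarith
  qed
  then show "\<exists>N>0. \<forall>i. ell2_norm_on (vec_mat_mult (q i) P) (UNIV - ball_qd d N i) \<le> \<epsilon>"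
    using \<open>R > 0\<close> \<open>S > 0\<close> by (intro exI[of _ "R + S"]) auto
qed

section \<open>The algebra of non-expansive operators\<close>

lemma nonexp_ops_add:
  assumes "A \<in> nonexp_ops d" and "B \<in> nonexp_ops d"
  shows "op_add A B \<in> nonexp_ops d"
proof -
  note A = nonexp_opsD[OF assms(1)] and B = nonexp_opsD[OF assms(2)]
  have "uniform_tail_decay d (\<lambda>i j. A (delta i) j + B (delta i) j)"
    by (rule uniform_tail_decay_add[OF bounded_op_ell2[OF A(1) delta_ell2]
          bounded_op_ell2[OF B(1) delta_ell2] A(2) B(2)])
  moreover have "uniform_tail_decay d (\<lambda>i j. A (delta j) i + B (delta j) i)"
    by (rule uniform_tail_decay_add[OF bounded_op_column_ell2(1)[OF A(1)]
          bounded_op_column_ell2(1)[OF B(1)] A(3) B(3)])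
  ultimately show ?thesis
    using bounded_op_add[OF A(1) B(1)] by (simp add: nonexp_ops_iff op_add_def)
qed

lemma nonexp_ops_scale:
  assumes "A \<in> nonexp_ops d"
  shows "op_scale c A \<in> nonexp_ops d"
proof -
  note A = nonexp_opsD[OF assms]
  have "uniform_tail_decay d (\<lambda>i j. c * A (delta i) j)"
    by (rule uniform_tail_decay_scale[OF A(2)])
  moreover have "uniform_tail_decay d (\<lambda>i j. c * A (delta j) i)"
    by (rule uniform_tail_decay_scale[OF A(3)])
  ultimately show ?thesis
    using bounded_op_scale[OF A(1)] by (simp add: nonexp_ops_iff op_scale_def)
qed

lemma nonexp_ops_mult:
  assumes d: "quasi_distance d"
    and balls: "\<forall>R>0. \<exists>M::nat. \<forall>i. finite (ball_qd d R i) \<and> card (ball_qd d R i) \<le> M"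
    and "A \<in> nonexp_ops d" and "B \<in> nonexp_ops d"
  shows "op_mult A B \<in> nonexp_ops d"
proof -
  note A = nonexp_opsD[OF assms(3)] and B = nonexp_opsD[OF assms(4)]
  have "(\<lambda>i. op_mult A B (delta i)) = (\<lambda>i. vec_mat_mult (B (delta i)) (\<lambda>k. A (delta k)))"
    unfolding op_mult_def using bounded_op_eq_vec_mat_mult[OF A(1) bounded_op_ell2[OF B(1) delta_ell2]]
    by blast
  moreover have "uniform_tail_decay d (\<lambda>i. vec_mat_mult (B (delta i)) (\<lambda>k. A (delta k)))"
  proof (rule uniform_tail_decay_vec_mat_mult[where L = "op_norm B",
        OF d balls _ _ _ _ op_norm_nonneg[OF A(1)] A(2) _ _ B(2)])
    fix r :: "'a \<Rightarrow> complex" assume "r \<in> ell2"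
    then show "vec_mat_mult r (\<lambda>k. A (delta k)) \<in> ell2"
      and "ell2_norm_on (vec_mat_mult r (\<lambda>k. A (delta k))) UNIV \<le> op_norm A * ell2_norm_on r UNIV"
      using bounded_op_ell2[OF A(1)] ell2_norm_op_le[OF A(1)] bounded_op_eq_vec_mat_mult[OF A(1)] by simp_all
  qed (simp_all add: bounded_op_ell2[OF A(1) delta_ell2] bounded_op_ell2[OF B(1) delta_ell2]
      bounded_op_column_ell2[OF A(1)] ell2_norm_op_delta_le[OF B(1)])
  \<comment> \<open>The transposed matrix of AB is the product of the transposed matrices in reverse order.\<close>
  moreover have "(\<lambda>i j. op_mult A B (delta j) i)
      = (\<lambda>i. vec_mat_mult (\<lambda>k. A (delta k) i) (\<lambda>k j. B (delta j) k))"
    unfolding op_mult_def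
    using bounded_op_eq_vec_mat_mult[OF A(1) bounded_op_ell2[OF B(1) delta_ell2]]
    by (simp add: vec_mat_mult_def fun_eq_iff mult.commute)
  moreover have "uniform_tail_decay d (\<lambda>i. vec_mat_mult (\<lambda>k. A (delta k) i) (\<lambda>k j. B (delta j) k))"
  proof (rule uniform_tail_decay_vec_mat_mult[where L = "op_norm A",
        OF d balls _ _ _ _ op_norm_nonneg[OF B(1)] B(3) _ _ A(3)])
    fix r :: "'a \<Rightarrow> complex" assume "r \<in> ell2"
    then show "vec_mat_mult r (\<lambda>k j. B (delta j) k) \<in> ell2"
      and "ell2_norm_on (vec_mat_mult r (\<lambda>k j. B (delta j) k)) UNIV \<le> op_norm B * ell2_norm_on r UNIV"
      by (rule vec_mat_mult_transpose[OF B(1)])+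
  qed (simp_all add: bounded_op_ell2[OF B(1) delta_ell2] bounded_op_column_ell2[OF A(1)]
      bounded_op_column_ell2[OF B(1)])
  ultimately show ?thesis
    using bounded_op_mult[OF A(1) B(1)] by (simp add: nonexp_ops_iff)
qed

lemma uniform_tail_decay_rows_approx:
  assumes A: "bounded_op A" and approx: "\<And>\<epsilon>. \<epsilon> > 0 \<Longrightarrow> \<exists>B\<in>nonexp_ops d. op_norm (op_diff A B) < \<epsilon>"
  shows "uniform_tail_decay d (\<lambda>i. A (delta i))"
proof (rule uniform_tail_decay_approx)
  show "A (delta i) \<in> ell2" for i
    by (rule bounded_op_ell2[OF A delta_ell2])
  fix \<epsilon> :: real assume "\<epsilon> > 0"
  then obtain B where B: "B \<in> nonexp_ops d" and close: "op_norm (op_diff A B) < \<epsilon>"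
    using approx by blast
  note B_bounded = nonexp_opsD(1)[OF B] and B_decay = nonexp_opsD(2)[OF B]
  have "ell2_norm_on (\<lambda>j. A (delta i) j - B (delta i) j) UNIV \<le> \<epsilon>" for i
    using ell2_norm_op_delta_le[OF bounded_op_diff[OF A B_bounded], of i] close
    unfolding op_diff_def by simp
  then show "\<exists>w. uniform_tail_decay d w \<and> (\<forall>i. w i \<in> ell2) \<and>
                 (\<forall>i. ell2_norm_on (\<lambda>j. A (delta i) j - w i j) UNIV \<le> \<epsilon>)"
    using B_decay bounded_op_ell2[OF B_bounded delta_ell2] by blast
qed

lemma uniform_tail_decay_columns_approx:
  assumes A: "bounded_op A" and approx: "\<And>\<epsilon>. \<epsilon> > 0 \<Longrightarrow> \<exists>B\<in>nonexp_ops d. op_norm (op_diff A B) < \<epsilon>"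
  shows "uniform_tail_decay d (\<lambda>i j. A (delta j) i)"
proof (rule uniform_tail_decay_approx)
  show "(\<lambda>j. A (delta j) i) \<in> ell2" for i
    by (rule bounded_op_column_ell2(1)[OF A])
  fix \<epsilon> :: real assume "\<epsilon> > 0"
  then obtain B where B: "B \<in> nonexp_ops d" and close: "op_norm (op_diff A B) < \<epsilon>"
    using approx by blast
  note B_bounded = nonexp_opsD(1)[OF B] and B_decay = nonexp_opsD(3)[OF B]
  have "ell2_norm_on (\<lambda>j. A (delta j) i - B (delta j) i) UNIV \<le> \<epsilon>" for i
    using bounded_op_column_ell2(2)[OF bounded_op_diff[OF A B_bounded], of i] close
    unfolding op_diff_def by simp
  then show "\<exists>w. uniform_tail_decay d w \<and> (\<forall>i. w i \<in> ell2) \<and>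
                 (\<forall>i. ell2_norm_on (\<lambda>j. A (delta j) i - w i j) UNIV \<le> \<epsilon>)"
    using B_decay bounded_op_column_ell2(1)[OF B_bounded] by blast
qed

lemma nonexp_ops_approx:
  assumes "bounded_op A" and "\<And>\<epsilon>. \<epsilon> > 0 \<Longrightarrow> \<exists>B\<in>nonexp_ops d. op_norm (op_diff A B) < \<epsilon>"
  shows "A \<in> nonexp_ops d"
  using assms uniform_tail_decay_rows_approx[OF assms] uniform_tail_decay_columns_approx[OF assms]
  by (simp add: nonexp_ops_iff)

lemma nonexp_ops_filter_limit:
  assumes "J \<noteq> bot" and "\<forall>j. As j \<in> nonexp_ops d" and "bounded_op A"
    and "\<forall>\<epsilon>>0. eventually (\<lambda>j. op_norm (op_diff A (As j)) < \<epsilon>) J"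
  shows "A \<in> nonexp_ops d"
  using assms(3)
proof (rule nonexp_ops_approx)
  fix \<epsilon> :: real assume "\<epsilon> > 0"
  then obtain j where "op_norm (op_diff A (As j)) < \<epsilon>"
    using eventually_happens'[OF assms(1)] assms(4) by blast
  then show "\<exists>B\<in>nonexp_ops d. op_norm (op_diff A B) < \<epsilon>"
    using assms(2) by blast
qed

lemma nonexp_ops_adjoint:
  assumes "A \<in> nonexp_ops d" and adj: "is_adjoint A B"
  shows "B \<in> nonexp_ops d"
proof -
  note A_rows = nonexp_opsD(2)[OF assms(1)] and A_cols = nonexp_opsD(3)[OF assms(1)]
  have adjoint_identity: "\<forall>x\<in>ell2. \<forall>y\<in>ell2. ell2_inner (A x) y = ell2_inner x (B y)"
    using adj unfolding is_adjoint_def by (elim conjE)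
  have entries: "B (delta i) j = cnj (A (delta j) i)" for i j
    using adjoint_identity[rule_format, OF delta_ell2 delta_ell2, of j i]
    by (simp add: ell2_inner_delta_left ell2_inner_delta_right)
  have "(\<lambda>i. B (delta i)) = (\<lambda>i j. cnj (A (delta j) i))"
    using entries by (intro ext) simp
  then have rows: "uniform_tail_decay d (\<lambda>i. B (delta i))"
    using A_cols uniform_tail_decay_cnj[of d "\<lambda>i j. A (delta j) i"] by simp
  have "(\<lambda>i j. B (delta j) i) = (\<lambda>i j. cnj (A (delta i) j))"
    using entries by (intro ext) simp
  then have columns: "uniform_tail_decay d (\<lambda>i j. B (delta j) i)"
    using A_rows uniform_tail_decay_cnj[of d "\<lambda>i. A (delta i)"] by simp
  have "bounded_op B"
    using adj unfolding is_adjoint_def by (elim conjE)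
  then show ?thesis
    using rows columns by (simp add: nonexp_ops_iff)
qed

theorem theorem7p7:
  fixes d :: "'i::countable \<Rightarrow> 'i \<Rightarrow> real"
  assumes "quasi_distance d"
    and "\<forall>R>0. \<exists>M::nat. \<forall>i. finite (ball_qd d R i) \<and> card (ball_qd d R i) \<le> M"
  shows "(\<forall>A\<in>nonexp_ops d. \<forall>B\<in>nonexp_ops d. \<forall>c.
            op_add A B \<in> nonexp_ops d \<and> op_scale c A \<in> nonexp_ops d)
     \<and> (\<forall>A\<in>nonexp_ops d. \<forall>B\<in>nonexp_ops d. op_mult A B \<in> nonexp_ops d)
     \<and> (\<forall>(J :: 'j filter) (As :: 'j \<Rightarrow> 'i op) A.
           J \<noteq> bot \<longrightarrow> (\<forall>j. As j \<in> nonexp_ops d) \<longrightarrow> bounded_op A \<longrightarrow>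
           (\<forall>\<epsilon>>0. eventually (\<lambda>j. op_norm (op_diff A (As j)) < \<epsilon>) J) \<longrightarrow>
           A \<in> nonexp_ops d)
     \<and> (\<forall>A B. A \<in> nonexp_ops d \<longrightarrow> is_adjoint A B \<longrightarrow> B \<in> nonexp_ops d)"
  using nonexp_ops_add nonexp_ops_scale nonexp_ops_mult[OF assms] nonexp_ops_filter_limit nonexp_ops_adjoint
  by auto

end
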